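(* Let $G=(V,E)$ be a simple connected graph with $N\ge 2$ nodes, and let $\tilde{L}_\tau$ denote either its Mellin transformed $d$-path Laplacian $\tilde{L}_{\mathrm{Mell}}=\sum_{d=1}^{d_{max}} d^{-s}L_d$ (with parameter $s>0$) or its Laplace transformed $d$-path Laplacian $\tilde{L}_{\mathrm{Lapl}}=L+\sum_{d=2}^{d_{max}} e^{-\lambda d}L_d$ (with parameter $\lambda>0$). Define the generalized eigenratio $Q_\tau=\lambda_2(\tilde{L}_\tau)/\lambda_N(\tilde{L}_\tau)$ and the eigenratio of the graph $Q=\lambda_2(L)/\lambda_N(L)$. Then $Q_\tau\to Q$ as $s\to\infty$ (respectively $\lambda\to\infty$), and $Q_\tau\to 1$ as $s\to 0$ (respectively $\lambda\to 0$).
   Context: For a simple connected graph $G=(V,E)$ with $N$ nodes, $d_{ij}$ denotes the shortest-path distance between nodes $i$ and $j$ and $d_{max}$ the diameter. $L$ is the usual graph Laplacian ($L_{ii}=k_i$ the degree, $L_{ij}=-1$ if $(i,j)\in E$, $0$ otherwise). For $1\le d\le d_{max}$, the $d$-path Laplacian $L_d$ is the $N\times N$ matrix with $(L_d)_{ij}=-1$ if $i\neq j$ and $d_{ij}=d$, $(L_d)_{ij}=0$ if $i\ne j$ and $d_{ij}\neq d$, and $(L_d)_{ii}$ equal to the number of nodes $j$ with $d_{ij}=d$; thus $L_1=L$. For a symmetric positive semidefinite matrix $M$ of this Laplacian type, $0=\lambda_1(M)\le\lambda_2(M)\le\cdots\le\lambda_N(M)$ denote its eigenvalues in increasing order. 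*)

theory Defs
  imports "Jordan_Normal_Form.Char_Poly" "HOL-Computational_Algebra.Polynomial"
    "HOL-Library.Multiset" Complex_Main
begin

definition simple_graph :: "nat \<Rightarrow> (nat \<Rightarrow> nat \<Rightarrow> bool) \<Rightarrow> bool" where
  "simple_graph N E \<longleftrightarrow> (\<forall>i j. E i j \<longrightarrow> i < N \<and> j < N) \<and> (\<forall>i j. E i j \<longrightarrow> E j i) \<and> (\<forall>i. \<not> E i i)"

definition walk :: "nat \<Rightarrow> (nat \<Rightarrow> nat \<Rightarrow> bool) \<Rightarrow> nat \<Rightarrow> nat \<Rightarrow> nat \<Rightarrow> bool" where
  "walk N E i j k \<longleftrightarrow> (\<exists>f::nat \<Rightarrow> nat. f 0 = i \<and> f k = j \<and> (\<forall>t\<le>k. f t < N) \<and> (\<forall>t<k. E (f t) (f (Suc t))))"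

definition connected_graph :: "nat \<Rightarrow> (nat \<Rightarrow> nat \<Rightarrow> bool) \<Rightarrow> bool" where
  "connected_graph N E \<longleftrightarrow> (\<forall>i<N. \<forall>j<N. \<exists>k. walk N E i j k)"

definition gdist :: "nat \<Rightarrow> (nat \<Rightarrow> nat \<Rightarrow> bool) \<Rightarrow> nat \<Rightarrow> nat \<Rightarrow> nat" where
  "gdist N E i j = (LEAST k. walk N E i j k)"

definition diameter :: "nat \<Rightarrow> (nat \<Rightarrow> nat \<Rightarrow> bool) \<Rightarrow> nat" where
  "diameter N E = Max {gdist N E i j | i j. i < N \<and> j < N}"

definition laplacian :: "nat \<Rightarrow> (nat \<Rightarrow> nat \<Rightarrow> bool) \<Rightarrow> real mat" where
  "laplacian N E = mat N N (\<lambda>(i,j). if i = j then real (card {k. k < N \<and> E i k})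
                                     else if E i j then -1 else 0)"

definition path_laplacian :: "nat \<Rightarrow> (nat \<Rightarrow> nat \<Rightarrow> bool) \<Rightarrow> nat \<Rightarrow> real mat" where
  "path_laplacian N E d = mat N N (\<lambda>(i,j). if i = j then real (card {k. k < N \<and> k \<noteq> i \<and> gdist N E i k = d})
                                     else if gdist N E i j = d then -1 else 0)"

definition mellin_laplacian :: "nat \<Rightarrow> (nat \<Rightarrow> nat \<Rightarrow> bool) \<Rightarrow> real \<Rightarrow> real mat" where
  "mellin_laplacian N E s = mat N N (\<lambda>(i,j).
      \<Sum>d = 1..diameter N E. real d powr (-s) * path_laplacian N E d $$ (i,j))"

definition laplace_laplacian :: "nat \<Rightarrow> (nat \<Rightarrow> nat \<Rightarrow> bool) \<Rightarrow> real \<Rightarrow> real mat" where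
  "laplace_laplacian N E lam = mat N N (\<lambda>(i,j). laplacian N E $$ (i,j) +
      (\<Sum>d = 2..diameter N E. exp (- lam * real d) * path_laplacian N E d $$ (i,j)))"

text \<open>Eigenvalues (roots of the characteristic polynomial, with multiplicity) in
  increasing order; eig A k is lambda_k(A) for 1 \<le> k \<le> N.\<close>
definition eig :: "real mat \<Rightarrow> nat \<Rightarrow> real" where
  "eig A k = sorted_list_of_multiset (proots (char_poly A)) ! (k - 1)"

definition eigenratio :: "real mat \<Rightarrow> real" where
  "eigenratio A = eig A 2 / eig A (dim_row A)"

end

theory Submission
  imports Defs
begin

text \<open>Both transforms are weighted sums \<open>\<Sum>\<^sub>d w(d) L\<^sub>d\<close> whose weights depend continuously on
  the parameter. For large parameters the weights tend to those of \<open>L = L\<^sub>1\<close> alone; for small ones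
  they all tend to \<open>1\<close>, and \<open>\<Sum>\<^sub>d L\<^sub>d = N I - J\<close> is the Laplacian of the complete graph, with
  spectrum \<open>0, N, \<dots>, N\<close>. The sorted eigenvalues of a real symmetric matrix depend continuously on
  its entries: its characteristic polynomial splits over the reals, and a compactness argument
  on the sorted lists of roots applies. Both limit matrices have a positive largest eigenvalue
  because their trace is positive, so the eigenratios converge as well.\<close>

section \<open>Real symmetric matrices\<close>

lemma mult_mat_vec_nth:
  assumes "A \<in> carrier_mat n n" "v \<in> carrier_vec n" "i < n"
  shows "(A *\<^sub>v v) $ i = (\<Sum>j<n. A $$ (i,j) * v $ j)"
  using assms by (auto simp: scalar_prod_def row_def intro!: sum.cong)

lemma nonzero_vec_nth:
  assumes "v \<in> carrier_vec n" "v \<noteq> 0\<^sub>v n"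
  obtains i where "i < n" "v $ i \<noteq> 0"
  using assms by (metis carrier_vecD eq_vecI index_zero_vec(1) index_zero_vec(2))

lemma symmetric_mat_index:
  assumes "A \<in> carrier_mat n n" "A\<^sup>T = A" "i < n" "j < n"
  shows "A $$ (i,j) = A $$ (j,i)"
  using assms by (metis carrier_matD(1,2) index_transpose_mat(1))

lemma real_symmetric_eigenvalue_real:
  fixes A :: "real mat"
  assumes A: "A \<in> carrier_mat n n" and sym: "A\<^sup>T = A"
    and a: "eigenvalue (map_mat complex_of_real A) a"
  shows "a \<in> \<real>"
proof -
  let ?A = "map_mat complex_of_real A"
  have A': "?A \<in> carrier_mat n n" using A by simp
  with a obtain v where v: "v \<in> carrier_vec n" "v \<noteq> 0\<^sub>v n" "?A *\<^sub>v v = a \<cdot>\<^sub>v v"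
    unfolding eigenvalue_def eigenvector_def by auto
  have row: "(\<Sum>j<n. of_real (A $$ (i,j)) * v $ j) = a * v $ i" if "i < n" for i
    using mult_mat_vec_nth[OF A' v(1) that] v(3) v(1) A that by simp
  define s where "s = (\<Sum>i<n. \<Sum>j<n. cnj (v $ i) * of_real (A $$ (i,j)) * v $ j)"
  define w where "w = (\<Sum>i<n. (cmod (v $ i))\<^sup>2)"
  \<comment> \<open>the Rayleigh quotient \<open>s / w\<close> equals \<open>a\<close>, and symmetry makes \<open>s\<close> self-conjugate\<close>
  have "s = (\<Sum>i<n. cnj (v $ i) * (a * v $ i))"
    unfolding s_def by (intro sum.cong refl) (simp add: row sum_distrib_left[symmetric] mult.assoc)
  also have "\<dots> = a * of_real w"
    unfolding w_def of_real_sum sum_distrib_left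
    by (intro sum.cong refl) (use complex_norm_square in \<open>simp add: mult_ac\<close>)
  finally have s_eq: "s = a * of_real w" .
  have "cnj s = (\<Sum>j<n. \<Sum>i<n. cnj (v $ j) * of_real (A $$ (j,i)) * v $ i)"
    unfolding s_def by (subst sum.swap) (auto simp: mult_ac symmetric_mat_index[OF A sym] intro!: sum.cong)
  then have "s \<in> \<real>" unfolding s_def by (simp add: Reals_cnj_iff)
  obtain i where "i < n" "v $ i \<noteq> 0" using nonzero_vec_nth[OF v(1,2)] .
  then have "0 < w"
    unfolding w_def by (intro sum_pos2[of _ i]) auto
  with s_eq have "a = s / of_real w" by simp
  with \<open>s \<in> \<real>\<close> show ?thesis by simp
qed

lemma poly_linear_factors: "poly (\<Prod>a\<leftarrow>as. [:-a, 1:]) x = (\<Prod>a\<leftarrow>as. x - a :: 'a :: comm_ring_1)"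
  by (induct as) (simp_all add: algebra_simps)

lemma real_symmetric_char_poly_splits:
  fixes A :: "real mat"
  assumes A: "A \<in> carrier_mat n n" and sym: "A\<^sup>T = A"
  obtains bs where "char_poly A = (\<Prod>b\<leftarrow>bs. [:-b, 1:])" "length bs = n"
proof -
  let ?A = "map_mat complex_of_real A"
  have A': "?A \<in> carrier_mat n n" using A by simp
  obtain as where cp: "char_poly ?A = (\<Prod>a\<leftarrow>as. [:-a, 1:])" and len: "length as = n"
    using char_poly_factorized[OF A'] by auto
  have "a \<in> \<real>" if "a \<in> set as" for a
  proof (rule real_symmetric_eigenvalue_real[OF A sym])
    show "eigenvalue ?A a"
      unfolding eigenvalue_root_char_poly[OF A'] cp poly_prod_list
      using that by (auto simp: prod_list_zero_iff)
  qed
  then have Re_as: "complex_of_real (Re a) = a" if "a \<in> set as" for a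
    using that by (auto simp: Reals_def)
  have "poly (char_poly A) x = poly (\<Prod>b\<leftarrow>map Re as. [:-b, 1:]) x" for x
  proof -
    have "complex_of_real (poly (char_poly A) x) = poly (char_poly ?A) (of_real x)"
      by (simp add: of_real_hom.char_poly_hom[OF A])
    also have "\<dots> = (\<Prod>a\<leftarrow>as. of_real x - a)"
      by (simp add: cp poly_linear_factors)
    also have "\<dots> = complex_of_real (\<Prod>b\<leftarrow>map Re as. x - b)"
      using Re_as by (induct as) auto
    also have "\<dots> = complex_of_real (poly (\<Prod>b\<leftarrow>map Re as. [:-b, 1:]) x)"
      by (simp only: poly_linear_factors)
    finally show ?thesis by (metis of_real_eq_iff)
  qed
  then have "char_poly A = (\<Prod>b\<leftarrow>map Re as. [:-b, 1:])"
    using poly_eq_poly_eq_iff by blast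
  with len show ?thesis by (intro that[of "map Re as"]) auto
qed

section \<open>Eigenvalues as sorted roots\<close>

lemma proots_linear_factors: "proots (\<Prod>a\<leftarrow>as. [:-a, 1:]) = mset (as :: 'a :: idom list)"
proof (induct as)
  case (Cons a as)
  have "(\<Prod>a\<leftarrow>as. [:-a, 1:]) \<noteq> 0" by (auto simp: prod_list_zero_iff)
  then have "proots ([:-a, 1:] * (\<Prod>a\<leftarrow>as. [:-a, 1:])) = {#a#} + proots (\<Prod>a\<leftarrow>as. [:-a, 1:])"
    by (subst proots_mult) auto
  with Cons show ?case by simp
qed simp

lemma eig_linear_factors:
  "char_poly A = (\<Prod>b\<leftarrow>bs. [:-b, 1:]) \<Longrightarrow> eig A (Suc m) = sort bs ! m"
  unfolding eig_def by (simp add: proots_linear_factors sorted_list_of_multiset_mset)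

lemma linear_factor_root_eigenvalue:
  fixes A :: "'a :: field mat"
  assumes "A \<in> carrier_mat n n" "char_poly A = (\<Prod>b\<leftarrow>bs. [:-b, 1:])" "b \<in> set bs"
  shows "eigenvalue A b"
  using assms by (auto simp: eigenvalue_root_char_poly poly_linear_factors prod_list_zero_iff)

lemma sum_list_sort: "sum_list (sort xs) = sum_list (xs :: 'a :: {linorder, comm_monoid_add} list)"
  by (metis mset_sort sum_mset_sum_list)

lemma sorted_linear_factors_unique:
  fixes xs ys :: "'a :: linordered_idom list"
  assumes "sorted xs" "sorted ys" "(\<Prod>a\<leftarrow>xs. [:-a, 1:]) = (\<Prod>a\<leftarrow>ys. [:-a, 1:])"
  shows "xs = ys"
proof -
  have "mset xs = mset ys" using arg_cong[OF assms(3), of proots] by (simp add: proots_linear_factors)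
  then have "sort ys = xs" using assms(1) by (intro properties_for_sort) simp
  with assms(2) show ?thesis by (simp add: sorted_sort_id)
qed

definition mat_trace :: "'a :: comm_monoid_add mat \<Rightarrow> 'a" where
  "mat_trace A = (\<Sum>i<dim_row A. A $$ (i,i))"

lemma mat_trace_mat_delete:
  fixes A :: "'a :: ab_group_add mat"
  assumes A: "A \<in> carrier_mat (Suc n) (Suc n)" and i: "i < Suc n"
  shows "mat_trace (mat_delete A i i) = mat_trace A - A $$ (i,i)"
proof -
  let ?skip = "\<lambda>k. if k < i then k else Suc k"
  have "mat_trace (mat_delete A i i) = (\<Sum>k<n. A $$ (?skip k, ?skip k))"
    using A by (simp add: mat_trace_def mat_delete_def)
  also have "\<dots> = sum (\<lambda>k. A $$ (k,k)) (?skip ` {..<n})"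
    by (rule sum.reindex[symmetric, unfolded o_def]) (auto simp: inj_on_def)
  also have "?skip ` {..<n} = {..<Suc n} - {i}"
  proof
    show "{..<Suc n} - {i} \<subseteq> ?skip ` {..<n}"
    proof
      fix k assume k: "k \<in> {..<Suc n} - {i}"
      show "k \<in> ?skip ` {..<n}"
        using k i by (cases "k < i") (auto intro!: image_eqI[of _ _ "k - 1"])
    qed
  qed auto
  also have "sum (\<lambda>k. A $$ (k,k)) ({..<Suc n} - {i}) = mat_trace A - A $$ (i,i)"
    using A i by (simp add: mat_trace_def sum_diff1)
  finally show ?thesis .
qed

text \<open>Induction on the dimension, using the expansion of the derivative of the characteristic
  polynomial as the sum of the characteristic polynomials of the principal minors.\<close>
lemma coeff_char_poly_trace:
  fixes A :: "'a :: {idom, ring_char_0} mat"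
  shows "A \<in> carrier_mat (Suc m) (Suc m) \<Longrightarrow> coeff (char_poly A) m = - mat_trace A"
proof (induct m arbitrary: A)
  case 0
  then have "upper_triangular A" by (auto simp: upper_triangular_def)
  moreover have "diag_mat A = [A $$ (0,0)]" using 0 by (auto simp: diag_mat_def)
  ultimately have "char_poly A = [:- A $$ (0,0), 1:]" using char_poly_upper_triangular[OF 0] by simp
  then show ?case using 0 by (simp add: mat_trace_def)
next
  case (Suc m A)
  have "of_nat (Suc m) * coeff (char_poly A) (Suc m) = coeff (pderiv (char_poly A)) m"
    by (simp add: coeff_pderiv)
  also have "\<dots> = (\<Sum>i < Suc (Suc m). coeff (char_poly (mat_delete A i i)) m)"
    by (simp add: pderiv_char_poly[OF Suc(2)] coeff_sum)
  also have "\<dots> = (\<Sum>i < Suc (Suc m). A $$ (i,i) - mat_trace A)"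
  proof (rule sum.cong[OF refl])
    fix i assume i: "i \<in> {..<Suc (Suc m)}"
    have "mat_delete A i i \<in> carrier_mat (Suc m) (Suc m)"
      using mat_delete_carrier[OF Suc(2)] by simp
    with Suc(1) mat_trace_mat_delete[OF Suc(2)] i
    show "coeff (char_poly (mat_delete A i i)) m = A $$ (i,i) - mat_trace A" by simp
  qed
  also have "\<dots> = of_nat (Suc m) * - mat_trace A"
    using Suc(2) by (simp add: sum_subtractf mat_trace_def algebra_simps)
  finally show ?case by (rule mult_left_cancel[OF of_nat_neq_0, THEN iffD1])
qed

lemma coeff_linear_factors:
  fixes as :: "'a :: comm_ring_1 list"
  shows "coeff (\<Prod>a\<leftarrow>as. [:-a, 1:]) (length as) = 1 \<and>
    coeff (\<Prod>a\<leftarrow>as. [:-a, 1:]) (length as - 1) = (if as = [] then 1 else - sum_list as)"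
proof (induct as)
  case (Cons a as)
  let ?q = "\<Prod>a\<leftarrow>as. [:-a, 1:]"
  have "degree ?q = length as"
    by (rule degree_linear_factors[of uminus as, simplified])
  then have "coeff ?q (Suc (length as)) = 0" by (simp add: coeff_eq_0)
  moreover have "(\<Prod>a\<leftarrow>a # as. [:-a, 1:]) = Polynomial.smult (-a) ?q + pCons 0 ?q"
    by (simp add: mult_pCons_left)
  ultimately show ?case using Cons by (cases as) auto
qed simp

lemma sum_linear_factors_eq_trace:
  fixes A :: "real mat"
  assumes A: "A \<in> carrier_mat n n" and cp: "char_poly A = (\<Prod>b\<leftarrow>bs. [:-b, 1:])"
  shows "sum_list bs = mat_trace A"
proof -
  have "degree (\<Prod>b\<leftarrow>bs. [:-b, 1:]) = length bs"
    by (rule degree_linear_factors[of uminus bs, simplified])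
  then have len: "length bs = n" using degree_monic_char_poly[OF A] cp by simp
  show ?thesis
  proof (cases n)
    case 0
    then show ?thesis using A len by (simp add: mat_trace_def)
  next
    case (Suc m)
    then have "coeff (char_poly A) m = - mat_trace A" using A by (simp add: coeff_char_poly_trace)
    moreover have "coeff (char_poly A) m = - sum_list bs"
      using coeff_linear_factors[of bs] cp len Suc by auto
    ultimately show ?thesis by simp
  qed
qed

lemma largest_eig_pos_if_trace_pos:
  fixes A :: "real mat"
  assumes A: "A \<in> carrier_mat n n" and sym: "A\<^sup>T = A" and tr: "mat_trace A > 0"
  shows "eig A n > 0"
proof -
  obtain bs where cp: "char_poly A = (\<Prod>b\<leftarrow>bs. [:-b, 1:])" and len: "length bs = n"
    using real_symmetric_char_poly_splits[OF A sym] .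
  have "n \<noteq> 0" using A tr by (cases n) (auto simp: mat_trace_def)
  then obtain m where n: "n = Suc m" by (cases n) auto
  have "sum_list (sort bs) > 0"
    using sum_linear_factors_eq_trace[OF A cp] tr by (simp add: sum_list_sort)
  show ?thesis
  proof (rule ccontr)
    assume nonpos: "\<not> eig A n > 0"
    have "x \<le> 0" if x: "x \<in> set (sort bs)" for x
    proof -
      obtain p where p: "p < length (sort bs)" "x = sort bs ! p"
        using x unfolding in_set_conv_nth by blast
      have "sort bs ! p \<le> sort bs ! m" using p(1) len n by (intro sorted_nth_mono) auto
      with p(2) show ?thesis using nonpos eig_linear_factors[OF cp, of m] n by simp
    qed
    then have "sum_list (sort bs) \<le> 0" by (rule sum_list_nonpos)
    with \<open>sum_list (sort bs) > 0\<close> show False by simp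
  qed
qed

section \<open>Continuity of the sorted eigenvalues\<close>

lemma abs_eigenvalue_le_sum_abs:
  fixes A :: "real mat"
  assumes A: "A \<in> carrier_mat n n" and x: "eigenvalue A x"
  shows "\<bar>x\<bar> \<le> (\<Sum>i<n. \<Sum>j<n. \<bar>A $$ (i,j)\<bar>)"
proof -
  obtain v where v: "v \<in> carrier_vec n" "v \<noteq> 0\<^sub>v n" "A *\<^sub>v v = x \<cdot>\<^sub>v v"
    using x A unfolding eigenvalue_def eigenvector_def by auto
  obtain i0 where i0: "i0 < n" "v $ i0 \<noteq> 0" using nonzero_vec_nth[OF v(1,2)] .
  let ?M = "Max ((\<lambda>j. \<bar>v $ j\<bar>) ` {..<n})"
  have "?M \<in> (\<lambda>j. \<bar>v $ j\<bar>) ` {..<n}" using i0(1) by (intro Max_in) auto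
  then obtain i where i: "i < n" "\<bar>v $ i\<bar> = ?M" by auto
  have max: "\<bar>v $ j\<bar> \<le> \<bar>v $ i\<bar>" if "j < n" for j
    using that i(2) by simp
  have vi: "\<bar>v $ i\<bar> > 0" using max[OF i0(1)] i0(2) by auto
  have "x * v $ i = (\<Sum>j<n. A $$ (i,j) * v $ j)"
    using mult_mat_vec_nth[OF A v(1) i(1)] v(3) v(1) i(1) by simp
  then have "\<bar>x\<bar> * \<bar>v $ i\<bar> = \<bar>\<Sum>j<n. A $$ (i,j) * v $ j\<bar>"
    by (simp only: abs_mult[symmetric])
  also have "\<dots> \<le> (\<Sum>j<n. \<bar>A $$ (i,j)\<bar> * \<bar>v $ j\<bar>)"
    using sum_abs[of "\<lambda>j. A $$ (i,j) * v $ j" "{..<n}"] by (simp add: abs_mult)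
  also have "\<dots> \<le> (\<Sum>j<n. \<bar>A $$ (i,j)\<bar>) * \<bar>v $ i\<bar>"
    unfolding sum_distrib_right by (intro sum_mono mult_left_mono max) auto
  finally have "\<bar>x\<bar> \<le> (\<Sum>j<n. \<bar>A $$ (i,j)\<bar>)" using vi by simp
  also have "\<dots> \<le> (\<Sum>i<n. \<Sum>j<n. \<bar>A $$ (i,j)\<bar>)"
    using i by (intro member_le_sum) (auto intro: sum_nonneg)
  finally show ?thesis .
qed

lemma bounded_seqs_convergent_subseq:
  fixes X :: "nat \<Rightarrow> nat \<Rightarrow> real"
  assumes "\<And>i. i < n \<Longrightarrow> Bseq (X i)"
  shows "\<exists>r l. strict_mono r \<and> (\<forall>i<n. (\<lambda>k. X i (r k)) \<longlonglongrightarrow> l i)"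
  using assms
proof (induct n)
  case 0
  show ?case by (intro exI[of _ id]) (auto simp: strict_mono_def)
next
  case (Suc n)
  have "\<exists>r l. strict_mono r \<and> (\<forall>i<n. (\<lambda>k. X i (r k)) \<longlonglongrightarrow> l i)"
    using Suc.prems by (intro Suc.hyps) simp
  then obtain r l where r: "strict_mono r" and l: "\<And>i. i < n \<Longrightarrow> (\<lambda>k. X i (r k)) \<longlonglongrightarrow> l i"
    by blast
  obtain f where f: "strict_mono f" "monoseq (\<lambda>k. X n (r (f k)))"
    using seq_monosub[of "\<lambda>k. X n (r k)"] by blast
  obtain K where "\<And>k. norm (X n k) \<le> K"
    using Suc.prems[of n] by (auto simp: Bseq_def)
  then have "Bseq (\<lambda>k. X n (r (f k)))"
    by (intro BseqI')
  then obtain L where L: "(\<lambda>k. X n (r (f k))) \<longlonglongrightarrow> L"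
    using f(2) Bseq_monoseq_convergent convergent_def by blast
  have "(\<lambda>k. X i ((r \<circ> f) k)) \<longlonglongrightarrow> (l(n := L)) i" if "i < Suc n" for i
    using that L LIMSEQ_subseq_LIMSEQ[OF l f(1)] by (cases "i = n") (auto simp: o_def less_Suc_eq)
  moreover have "strict_mono (r \<circ> f)" using r f(1) by (rule strict_mono_o)
  ultimately show ?case by blast
qed

lemma prod_list_conv_prod_nth: "(\<Prod>a\<leftarrow>xs. f a) = (\<Prod>j<length xs. f (xs ! j) :: 'a :: comm_monoid_mult)"
  by (induct xs) (simp_all del: prod.lessThan_Suc add: prod.lessThan_Suc_shift)

text \<open>By compactness, a subsequence of the root lists converges to a sorted list whose polynomial is
  the pointwise limit, so the limit list is \<open>ys\<close>; this contradicts staying away from \<open>ys ! i\<close>.\<close>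
lemma sorted_roots_LIMSEQ:
  fixes xs :: "nat \<Rightarrow> real list" and ys :: "real list"
  assumes len: "\<And>k. length (xs k) = n" "length ys = n"
    and sorted: "\<And>k. sorted (xs k)" "sorted ys"
    and bnd: "\<And>k a. a \<in> set (xs k) \<Longrightarrow> \<bar>a\<bar> \<le> B"
    and conv: "\<And>x. (\<lambda>k. \<Prod>a\<leftarrow>xs k. x - a) \<longlonglongrightarrow> (\<Prod>a\<leftarrow>ys. x - a)"
    and i: "i < n"
  shows "(\<lambda>k. xs k ! i) \<longlonglongrightarrow> ys ! i"
proof (rule ccontr)
  assume "\<not> ?thesis"
  then obtain e where e: "e > 0" and "\<forall>M. \<exists>k\<ge>M. e \<le> dist (xs k ! i) (ys ! i)"
    unfolding lim_sequentially by (auto simp: not_less)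
  then have inf: "infinite {k. e \<le> dist (xs k ! i) (ys ! i)}"
    by (simp add: infinite_nat_iff_unbounded_le)
  define r where "r = enumerate {k. e \<le> dist (xs k ! i) (ys ! i)}"
  have r: "strict_mono r" unfolding r_def using inf by (rule strict_mono_enumerate)
  have far: "e \<le> dist (xs (r k) ! i) (ys ! i)" for k
    using enumerate_in_set[OF inf] unfolding r_def by auto
  have "Bseq (\<lambda>k. xs (r k) ! j)" if "j < n" for j
    using that len by (intro BseqI'[of _ B]) (auto intro!: bnd[OF nth_mem])
  then have "\<exists>s l. strict_mono s \<and> (\<forall>j<n. (\<lambda>k. xs (r (s k)) ! j) \<longlonglongrightarrow> l j)"
    by (rule bounded_seqs_convergent_subseq)
  then obtain s l where s: "strict_mono s" and l: "\<And>j. j < n \<Longrightarrow> (\<lambda>k. xs (r (s k)) ! j) \<longlonglongrightarrow> l j"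
    by blast
  define zs where "zs = map l [0..<n]"
  have "sorted zs"
    unfolding zs_def sorted_iff_nth_mono
    by (auto intro!: LIMSEQ_le[OF l l] sorted_nth_mono[OF sorted(1)] simp: len)
  moreover have "(\<Prod>a\<leftarrow>zs. [:-a, 1:]) = (\<Prod>a\<leftarrow>ys. [:-a, 1:])"
  proof (rule poly_ext)
    fix x
    have "(\<lambda>k. \<Prod>a\<leftarrow>xs (r (s k)). x - a) \<longlonglongrightarrow> (\<Prod>a\<leftarrow>zs. x - a)"
      unfolding prod_list_conv_prod_nth len by (auto simp: zs_def intro!: tendsto_intros l)
    moreover have "(\<lambda>k. \<Prod>a\<leftarrow>xs (r (s k)). x - a) \<longlonglongrightarrow> (\<Prod>a\<leftarrow>ys. x - a)"
      using LIMSEQ_subseq_LIMSEQ[OF conv strict_mono_o[OF r s]] by (simp add: o_def)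
    ultimately show "poly (\<Prod>a\<leftarrow>zs. [:-a, 1:]) x = poly (\<Prod>a\<leftarrow>ys. [:-a, 1:]) x"
      unfolding poly_linear_factors by (rule LIMSEQ_unique)
  qed
  ultimately have "zs = ys" by (metis sorted(2) sorted_linear_factors_unique)
  moreover have "zs ! i = l i" using i by (simp add: zs_def)
  moreover have "e \<le> dist (l i) (ys ! i)"
    using far by (intro LIMSEQ_le_const[OF tendsto_dist[OF l[OF i] tendsto_const]]) auto
  ultimately show False using e by simp
qed

lemma poly_char_poly_expansion:
  fixes A :: "'a :: field mat"
  assumes A: "A \<in> carrier_mat n n"
  shows "poly (char_poly A) x = (\<Sum>p | p permutes {0..<n}. of_int (sign p) *
     (\<Prod>i=0..<n. (if i = p i then x else 0) - A $$ (i, p i)))"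
  unfolding char_poly_matrix[OF A] det_def'[of _ n, OF uminus_carrier_mat[OF char_matrix_closed[OF A]]]
proof (intro sum.cong refl arg_cong2[where f = "(*)"] prod.cong)
  fix p i assume "p \<in> {p. p permutes {0..<n}}" "i \<in> {0..<n}"
  then have "p i < n" using permutes_in_image by fastforce
  then show "(- char_matrix A x) $$ (i, p i) = (if i = p i then x else 0) - A $$ (i, p i)"
    using A \<open>i \<in> {0..<n}\<close> by (auto simp: char_matrix_def)
qed

lemma eig_LIMSEQ:
  fixes A :: "nat \<Rightarrow> real mat"
  assumes A: "\<And>k. A k \<in> carrier_mat n n" "\<And>k. (A k)\<^sup>T = A k"
    and A0: "A0 \<in> carrier_mat n n" "A0\<^sup>T = A0"
    and conv: "\<And>i j. i < n \<Longrightarrow> j < n \<Longrightarrow> (\<lambda>k. A k $$ (i,j)) \<longlonglongrightarrow> A0 $$ (i,j)"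
    and m: "m < n"
  shows "(\<lambda>k. eig (A k) (Suc m)) \<longlonglongrightarrow> eig A0 (Suc m)"
proof -
  have "\<exists>bs. char_poly (A k) = (\<Prod>b\<leftarrow>bs. [:-b, 1:]) \<and> length bs = n" for k
    using real_symmetric_char_poly_splits[OF A(1,2)] by blast
  then obtain bs where bs: "\<And>k. char_poly (A k) = (\<Prod>b\<leftarrow>bs k. [:-b, 1:])" "\<And>k. length (bs k) = n"
    by metis
  obtain cs where cs: "char_poly A0 = (\<Prod>b\<leftarrow>cs. [:-b, 1:])" "length cs = n"
    using real_symmetric_char_poly_splits[OF A0] .
  have poly_sort: "(\<Prod>a\<leftarrow>sort ds. x - a) = poly (\<Prod>b\<leftarrow>ds. [:-b, 1:]) x" for ds and x :: real
    unfolding poly_linear_factors by (metis mset_map mset_sort prod_mset_prod_list)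
  define T where "T k = (\<Sum>i<n. \<Sum>j<n. \<bar>A k $$ (i,j)\<bar>)" for k
  have "T \<longlonglongrightarrow> (\<Sum>i<n. \<Sum>j<n. \<bar>A0 $$ (i,j)\<bar>)"
    unfolding T_def by (intro tendsto_sum tendsto_rabs conv) auto
  then have "Bseq T" by (intro convergent_imp_Bseq convergentI)
  then obtain B where B: "\<And>k. norm (T k) \<le> B" by (auto simp: Bseq_def)
  show ?thesis
    unfolding eig_linear_factors[OF bs(1)] eig_linear_factors[OF cs(1)]
  proof (rule sorted_roots_LIMSEQ[where B = B])
    fix k a assume "a \<in> set (sort (bs k))"
    then have "\<bar>a\<bar> \<le> T k"
      unfolding T_def using A(1) bs(1) by (intro abs_eigenvalue_le_sum_abs linear_factor_root_eigenvalue) auto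
    then show "\<bar>a\<bar> \<le> B" using B[of k] by simp
  next
    fix x
    show "(\<lambda>k. \<Prod>a\<leftarrow>sort (bs k). x - a) \<longlonglongrightarrow> (\<Prod>a\<leftarrow>sort cs. x - a)"
      unfolding poly_sort bs(1)[symmetric] cs(1)[symmetric]
        poly_char_poly_expansion[OF A(1)] poly_char_poly_expansion[OF A0(1)]
    proof (intro tendsto_intros)
      fix p i assume "p \<in> {p. p permutes {0..<n}}" "i \<in> {0..<n}"
      then show "(\<lambda>k. A k $$ (i, p i)) \<longlonglongrightarrow> A0 $$ (i, p i)"
        using conv permutes_in_image by fastforce
    qed
  qed (use bs cs m in auto)
qed

lemma eig_continuous:
  fixes A0 :: "real mat"
  assumes A0: "A0 \<in> carrier_mat n n" "A0\<^sup>T = A0" and m: "m < n" and e: "e > 0"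
  obtains d where "d > 0" "\<And>A. A \<in> carrier_mat n n \<Longrightarrow> A\<^sup>T = A \<Longrightarrow>
    (\<And>i j. i < n \<Longrightarrow> j < n \<Longrightarrow> \<bar>A $$ (i,j) - A0 $$ (i,j)\<bar> < d) \<Longrightarrow>
    \<bar>eig A (Suc m) - eig A0 (Suc m)\<bar> < e"
proof (rule ccontr)
  assume "\<not> thesis"
  then have "\<exists>A. A \<in> carrier_mat n n \<and> A\<^sup>T = A \<and>
      (\<forall>i<n. \<forall>j<n. \<bar>A $$ (i,j) - A0 $$ (i,j)\<bar> < inverse (real (Suc k))) \<and>
      e \<le> \<bar>eig A (Suc m) - eig A0 (Suc m)\<bar>" for k
    using that[of "inverse (real (Suc k))"] by (meson not_less inverse_positive_iff_positive of_nat_0_less_iff zero_less_Suc)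
  then have "\<exists>A. \<forall>k. A k \<in> carrier_mat n n \<and> (A k)\<^sup>T = A k \<and>
      (\<forall>i<n. \<forall>j<n. \<bar>A k $$ (i,j) - A0 $$ (i,j)\<bar> < inverse (real (Suc k))) \<and>
      e \<le> \<bar>eig (A k) (Suc m) - eig A0 (Suc m)\<bar>"
    by (intro choice allI)
  then obtain A where A: "\<And>k. A k \<in> carrier_mat n n" "\<And>k. (A k)\<^sup>T = A k"
    and near: "\<And>k i j. i < n \<Longrightarrow> j < n \<Longrightarrow> \<bar>A k $$ (i,j) - A0 $$ (i,j)\<bar> < inverse (real (Suc k))"
    and far: "\<And>k. e \<le> \<bar>eig (A k) (Suc m) - eig A0 (Suc m)\<bar>"
    by blast
  have "(\<lambda>k. A k $$ (i,j)) \<longlonglongrightarrow> A0 $$ (i,j)" if "i < n" "j < n" for i j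
  proof (rule LIM_zero_cancel, rule tendsto_0_le[OF LIMSEQ_inverse_real_of_nat, where K = 1])
    show "\<forall>\<^sub>F k in sequentially. norm (A k $$ (i,j) - A0 $$ (i,j)) \<le> norm (inverse (real (Suc k))) * 1"
      using near[OF that] by (simp add: less_imp_le)
  qed
  then have "(\<lambda>k. \<bar>eig (A k) (Suc m) - eig A0 (Suc m)\<bar>) \<longlonglongrightarrow> 0"
    using eig_LIMSEQ[OF A A0 _ m] by (intro tendsto_rabs_zero LIM_zero) auto
  then have "e \<le> 0" using far by (intro LIMSEQ_le_const) auto
  with e show False by simp
qed

lemma tendsto_eig:
  fixes A :: "'b \<Rightarrow> real mat"
  assumes A: "\<And>t. A t \<in> carrier_mat n n" "\<And>t. (A t)\<^sup>T = A t"
    and A0: "A0 \<in> carrier_mat n n" "A0\<^sup>T = A0"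
    and conv: "\<And>i j. i < n \<Longrightarrow> j < n \<Longrightarrow> ((\<lambda>t. A t $$ (i,j)) \<longlongrightarrow> A0 $$ (i,j)) F"
    and m: "m < n"
  shows "((\<lambda>t. eig (A t) (Suc m)) \<longlongrightarrow> eig A0 (Suc m)) F"
proof (rule tendstoI)
  fix e :: real assume "e > 0"
  then obtain d where d: "d > 0" and cont: "\<And>B. B \<in> carrier_mat n n \<Longrightarrow> B\<^sup>T = B \<Longrightarrow>
    (\<And>i j. i < n \<Longrightarrow> j < n \<Longrightarrow> \<bar>B $$ (i,j) - A0 $$ (i,j)\<bar> < d) \<Longrightarrow>
    \<bar>eig B (Suc m) - eig A0 (Suc m)\<bar> < e"
    using eig_continuous[OF A0 m] by blast
  have "eventually (\<lambda>t. \<forall>(i,j) \<in> {..<n} \<times> {..<n}. dist (A t $$ (i,j)) (A0 $$ (i,j)) < d) F"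
    using tendstoD[OF conv d] by (intro eventually_ball_finite) auto
  then show "eventually (\<lambda>t. dist (eig (A t) (Suc m)) (eig A0 (Suc m)) < e) F"
    by eventually_elim (auto simp: dist_real_def intro!: cont A)
qed

lemma tendsto_eigenratio:
  fixes A :: "'b \<Rightarrow> real mat"
  assumes A: "\<And>t. A t \<in> carrier_mat n n" "\<And>t. (A t)\<^sup>T = A t"
    and A0: "A0 \<in> carrier_mat n n" "A0\<^sup>T = A0"
    and conv: "\<And>i j. i < n \<Longrightarrow> j < n \<Longrightarrow> ((\<lambda>t. A t $$ (i,j)) \<longlongrightarrow> A0 $$ (i,j)) F"
    and n: "2 \<le> n" and nz: "eig A0 n \<noteq> 0"
  shows "((\<lambda>t. eigenratio (A t)) \<longlongrightarrow> eigenratio A0) F"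
proof -
  have "((\<lambda>t. eig (A t) (Suc m)) \<longlongrightarrow> eig A0 (Suc m)) F" if "m < n" for m
    using tendsto_eig[OF A A0 conv that] .
  from this[of 1] this[of "n - 1"] have "((\<lambda>t. eig (A t) 2 / eig (A t) n) \<longlongrightarrow> eig A0 2 / eig A0 n) F"
    using n nz by (intro tendsto_divide) (auto simp: numeral_2_eq_2)
  moreover have "dim_row (A t) = n" "dim_row A0 = n" for t using A(1) A0(1) by auto
  ultimately show ?thesis by (simp add: eigenratio_def)
qed

section \<open>The Laplacian of the complete graph\<close>

definition complete_laplacian :: "nat \<Rightarrow> real mat" where
  "complete_laplacian n = mat n n (\<lambda>(i,j). (if i = j then real n else 0) - 1)"

lemma complete_laplacian_carrier: "complete_laplacian n \<in> carrier_mat n n"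
  by (simp add: complete_laplacian_def)

lemma complete_laplacian_symmetric: "(complete_laplacian n)\<^sup>T = complete_laplacian n"
  by (auto simp: complete_laplacian_def)

lemma complete_laplacian_index:
  "i < n \<Longrightarrow> j < n \<Longrightarrow> complete_laplacian n $$ (i,j) = (if i = j then real n else 0) - 1"
  by (simp add: complete_laplacian_def)

lemma complete_laplacian_eigenvalue:
  assumes "eigenvalue (complete_laplacian n) c"
  shows "c = 0 \<or> c = real n"
proof (rule disjCI)
  assume c: "c \<noteq> real n"
  obtain v where v: "v \<in> carrier_vec n" "v \<noteq> 0\<^sub>v n" "complete_laplacian n *\<^sub>v v = c \<cdot>\<^sub>v v"
    using assms carrier_matD(1)[OF complete_laplacian_carrier] unfolding eigenvalue_def eigenvector_def by auto
  define S where "S = (\<Sum>j<n. v $ j)"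
  have row: "real n * v $ i - S = c * v $ i" if i: "i < n" for i
  proof -
    have "c * v $ i = (\<Sum>j<n. ((if i = j then real n else 0) - 1) * v $ j)"
      using mult_mat_vec_nth[OF complete_laplacian_carrier v(1) i] v(3) v(1) i
      by (simp add: complete_laplacian_index)
    also have "\<dots> = (\<Sum>j<n. if i = j then real n * v $ j else 0) - S"
      unfolding S_def sum_subtractf[symmetric] by (intro sum.cong) (auto simp: algebra_simps)
    finally show ?thesis using i by simp
  qed
  then have vi: "v $ i = S / (real n - c)" if "i < n" for i
    using c that by (simp add: field_simps)
  obtain i0 where "i0 < n" "v $ i0 \<noteq> 0" using nonzero_vec_nth[OF v(1,2)] .
  then have "S \<noteq> 0" using vi by auto
  have "S = real n * (S / (real n - c))"
    by (subst S_def) (simp add: vi)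
  then have "S * (real n - c) = real n * S" using c by (simp add: field_simps)
  then show "c = 0" using \<open>S \<noteq> 0\<close> by (simp add: algebra_simps)
qed

text \<open>The eigenvalues lie in \<open>{0, n}\<close> and add up to the trace \<open>n (n - 1)\<close>, so \<open>0\<close> is simple.\<close>
lemma eig_complete_laplacian:
  assumes n: "2 \<le> n"
  shows "eig (complete_laplacian n) 2 = real n" "eig (complete_laplacian n) n = real n"
proof -
  let ?K = "complete_laplacian n"
  obtain cs where cs: "char_poly ?K = (\<Prod>b\<leftarrow>cs. [:-b, 1:])" "length cs = n"
    using real_symmetric_char_poly_splits[OF complete_laplacian_carrier complete_laplacian_symmetric] .
  define xs where "xs = sort cs"
  have len: "length xs = n" and sorted: "sorted xs" using cs by (auto simp: xs_def)
  have xs01: "xs ! p = 0 \<or> xs ! p = real n" if "p < n" for p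
  proof (intro complete_laplacian_eigenvalue linear_factor_root_eigenvalue)
    show "xs ! p \<in> set cs" using that len by (metis nth_mem set_sort xs_def)
  qed (use cs complete_laplacian_carrier in auto)
  have "sum_list xs = mat_trace ?K"
    using sum_linear_factors_eq_trace[OF complete_laplacian_carrier cs(1)]
    by (simp add: xs_def sum_list_sort)
  also have "\<dots> = real n * (real n - 1)"
    by (simp add: mat_trace_def complete_laplacian_def)
  finally have sum: "sum_list xs = real n * (real n - 1)" .
  obtain k where k: "n = Suc (Suc k)" using n by (metis add_2_eq_Suc le_Suc_ex)
  have x1: "xs ! 1 = real n"
  proof (rule ccontr)
    assume "xs ! 1 \<noteq> real n"
    then have "xs ! 1 = 0" using xs01[of 1] n by auto
    moreover have "xs ! 0 \<le> xs ! 1" using sorted len n by (intro sorted_nth_mono) auto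
    ultimately have "xs ! 0 = 0" "xs ! 1 = 0" using xs01[of 0] n by auto
    then have "sum_list xs = (\<Sum>p<k. xs ! Suc (Suc p))"
      using len k by (simp add: sum_list_sum_nth atLeast0LessThan sum.lessThan_Suc_shift del: sum.lessThan_Suc)
    also have "\<dots> \<le> (\<Sum>p<k. real n)"
      using xs01 k by (intro sum_mono) (metis Suc_less_eq lessThan_iff less_Suc_eq of_nat_0_le_iff order_refl)
    finally show False using sum k by (simp add: algebra_simps)
  qed
  have "xs ! 1 \<le> xs ! (n - 1)" using sorted len n by (intro sorted_nth_mono) auto
  then have "xs ! (n - 1) = real n" using xs01[of "n - 1"] x1 n by auto
  with x1 show "eig ?K 2 = real n" "eig ?K n = real n"
    using eig_linear_factors[OF cs(1), of 1] eig_linear_factors[OF cs(1), of "n - 1"] n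
    by (simp_all add: xs_def numeral_2_eq_2)
qed

section \<open>Weighted sums of the path Laplacians\<close>

definition weighted_path_laplacian :: "nat \<Rightarrow> (nat \<Rightarrow> nat \<Rightarrow> bool) \<Rightarrow> (nat \<Rightarrow> real) \<Rightarrow> real mat" where
  "weighted_path_laplacian N E w =
     mat N N (\<lambda>(i,j). \<Sum>d = 1..diameter N E. w d * path_laplacian N E d $$ (i,j))"

lemma weighted_path_laplacian_carrier: "weighted_path_laplacian N E w \<in> carrier_mat N N"
  by (simp add: weighted_path_laplacian_def)

lemma index_weighted_path_laplacian:
  "i < N \<Longrightarrow> j < N \<Longrightarrow>
    weighted_path_laplacian N E w $$ (i,j) = (\<Sum>d = 1..diameter N E. w d * path_laplacian N E d $$ (i,j))"
  by (simp add: weighted_path_laplacian_def)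

lemma mellin_laplacian_eq_weighted:
  "mellin_laplacian N E s = weighted_path_laplacian N E (\<lambda>d. real d powr - s)"
  by (simp add: mellin_laplacian_def weighted_path_laplacian_def)

locale connected_simple_graph =
  fixes N :: nat and E :: "nat \<Rightarrow> nat \<Rightarrow> bool"
  assumes simple: "simple_graph N E" and connected: "connected_graph N E" and two_le_N: "2 \<le> N"
begin

lemma edge_sym: "E i j \<Longrightarrow> E j i"
  using simple by (auto simp: simple_graph_def)

lemma edge_irrefl: "\<not> E i i"
  using simple by (auto simp: simple_graph_def)

lemma edge_vertices: "E i j \<Longrightarrow> i < N \<and> j < N"
  using simple by (auto simp: simple_graph_def)

lemma walk_sym: "walk N E i j k \<Longrightarrow> walk N E j i k"
proof -
  assume "walk N E i j k"
  then obtain f where f: "f 0 = i" "f k = j" "\<forall>t\<le>k. f t < N" "\<forall>t<k. E (f t) (f (Suc t))"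
    unfolding walk_def by auto
  have "E (f (k - t)) (f (k - Suc t))" if "t < k" for t
  proof -
    have "E (f (k - Suc t)) (f (Suc (k - Suc t)))" using f(4) that by simp
    moreover have "Suc (k - Suc t) = k - t" using that by simp
    ultimately show ?thesis using edge_sym by simp
  qed
  with f show ?thesis
    unfolding walk_def by (intro exI[of _ "\<lambda>t. f (k - t)"]) auto
qed

lemma gdist_sym: "gdist N E i j = gdist N E j i"
proof -
  have "walk N E i j = walk N E j i" by (intro ext) (blast intro: walk_sym)
  then show ?thesis by (simp add: gdist_def)
qed

lemma walk_0_iff: "walk N E i j 0 \<longleftrightarrow> i = j \<and> i < N"
  unfolding walk_def by auto

lemma walk_1_iff: "walk N E i j 1 \<longleftrightarrow> E i j"
proof
  assume "E i j"
  then show "walk N E i j 1"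
    unfolding walk_def using edge_vertices
    by (intro exI[of _ "\<lambda>t. if t = 0 then i else j"]) (auto simp: le_Suc_eq)
qed (auto simp: walk_def)

lemma walk_gdist: "i < N \<Longrightarrow> j < N \<Longrightarrow> walk N E i j (gdist N E i j)"
  using connected unfolding connected_graph_def gdist_def by (metis LeastI)

lemma gdist_pos: "i < N \<Longrightarrow> j < N \<Longrightarrow> i \<noteq> j \<Longrightarrow> 0 < gdist N E i j"
  using walk_gdist walk_0_iff by (metis gr0I)

lemma gdist_le_diameter: "i < N \<Longrightarrow> j < N \<Longrightarrow> gdist N E i j \<le> diameter N E"
proof -
  assume "i < N" "j < N"
  have "{gdist N E i j | i j. i < N \<and> j < N} = (\<lambda>(i,j). gdist N E i j) ` ({..<N} \<times> {..<N})"
    by auto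
  then show ?thesis
    unfolding diameter_def using \<open>i < N\<close> \<open>j < N\<close> by (intro Max_ge) auto
qed

lemma gdist_eq_1_iff: "i < N \<Longrightarrow> j < N \<Longrightarrow> gdist N E i j = 1 \<longleftrightarrow> E i j"
proof
  assume "i < N" "j < N" "gdist N E i j = 1"
  then show "E i j" using walk_gdist walk_1_iff by metis
next
  assume "E i j"
  show "gdist N E i j = 1"
    unfolding gdist_def
  proof (rule Least_equality)
    show "walk N E i j 1" using \<open>E i j\<close> by (rule walk_1_iff[THEN iffD2])
    fix k assume "walk N E i j k"
    then show "1 \<le> k" using \<open>E i j\<close> edge_irrefl walk_0_iff by (cases k) auto
  qed
qed

lemma diameter_pos: "0 < diameter N E"
  using gdist_pos[of 0 1] gdist_le_diameter[of 0 1] two_le_N by auto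

lemma exists_edge: "\<exists>j. E 0 j"
proof -
  obtain k where "walk N E 0 1 k" using connected two_le_N unfolding connected_graph_def by force
  then obtain f where f: "f 0 = 0" "f k = 1" "\<forall>t<k. E (f t) (f (Suc t))"
    unfolding walk_def by auto
  then have "k \<noteq> 0" by (cases k) auto
  then have "E (f 0) (f (Suc 0))" using f(3)[rule_format, of 0] by simp
  with f(1) show ?thesis by auto
qed

lemma weighted_path_laplacian_symmetric: "(weighted_path_laplacian N E w)\<^sup>T = weighted_path_laplacian N E w"
proof (rule eq_matI)
  fix i j assume "i < dim_row (weighted_path_laplacian N E w)" "j < dim_col (weighted_path_laplacian N E w)"
  then show "(weighted_path_laplacian N E w)\<^sup>T $$ (i,j) = weighted_path_laplacian N E w $$ (i,j)"
    by (cases "i = j") (auto simp: weighted_path_laplacian_def path_laplacian_def gdist_sym)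
qed (auto simp: weighted_path_laplacian_def)

lemma laplacian_eq_path_laplacian_1:
  assumes "i < N" "j < N"
  shows "laplacian N E $$ (i,j) = path_laplacian N E 1 $$ (i,j)"
proof -
  have "{k. k < N \<and> E i k} = {k. k < N \<and> k \<noteq> i \<and> gdist N E i k = 1}"
    using gdist_eq_1_iff[OF assms(1)] edge_irrefl by blast
  then show ?thesis
    using assms gdist_eq_1_iff[OF assms]
    by (cases "i = j") (simp_all add: laplacian_def path_laplacian_def)
qed

lemma laplacian_eq_weighted:
  "weighted_path_laplacian N E (\<lambda>d. if d = 1 then 1 else 0) = laplacian N E"
proof (rule eq_matI)
  fix i j assume "i < dim_row (laplacian N E)" "j < dim_col (laplacian N E)"
  then have ij: "i < N" "j < N" by (auto simp: laplacian_def)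
  have "(\<Sum>d = 1..diameter N E. (if d = 1 then 1 else 0) * path_laplacian N E d $$ (i,j))
      = (\<Sum>d = 1..diameter N E. if d = 1 then path_laplacian N E d $$ (i,j) else 0)"
    by (intro sum.cong) auto
  also have "\<dots> = path_laplacian N E 1 $$ (i,j)"
    using diameter_pos by (simp add: sum.delta)
  finally have "(\<Sum>d = 1..diameter N E. (if d = 1 then 1 else 0) * path_laplacian N E d $$ (i,j))
      = path_laplacian N E 1 $$ (i,j)" .
  then show "weighted_path_laplacian N E (\<lambda>d. if d = 1 then 1 else 0) $$ (i,j) = laplacian N E $$ (i,j)"
    using ij by (simp add: index_weighted_path_laplacian laplacian_eq_path_laplacian_1)
qed (auto simp: laplacian_def weighted_path_laplacian_def)

lemma laplace_laplacian_eq_weighted: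
  "laplace_laplacian N E lam = weighted_path_laplacian N E (\<lambda>d. if d = 1 then 1 else exp (- lam * real d))"
proof (rule eq_matI)
  fix i j assume "i < dim_row (weighted_path_laplacian N E (\<lambda>d. if d = 1 then 1 else exp (- lam * real d)))"
    "j < dim_col (weighted_path_laplacian N E (\<lambda>d. if d = 1 then 1 else exp (- lam * real d)))"
  then have ij: "i < N" "j < N" by (auto simp: weighted_path_laplacian_def)
  have "(\<Sum>d = 1..diameter N E. (if d = 1 then 1 else exp (- lam * real d)) * path_laplacian N E d $$ (i,j))
      = path_laplacian N E 1 $$ (i,j) + (\<Sum>d = 2..diameter N E. exp (- lam * real d) * path_laplacian N E d $$ (i,j))"
    using diameter_pos by (simp add: sum.atLeast_Suc_atMost numeral_2_eq_2)
  then show "laplace_laplacian N E lam $$ (i,j) =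
      weighted_path_laplacian N E (\<lambda>d. if d = 1 then 1 else exp (- lam * real d)) $$ (i,j)"
    using ij by (simp add: laplace_laplacian_def index_weighted_path_laplacian laplacian_eq_path_laplacian_1)
qed (auto simp: laplace_laplacian_def weighted_path_laplacian_def)

text \<open>Every pair of distinct vertices is at exactly one distance \<open>d \<in> {1..diameter}\<close>.\<close>
lemma complete_laplacian_eq_weighted: "weighted_path_laplacian N E (\<lambda>d. 1) = complete_laplacian N"
proof (rule eq_matI)
  fix i j assume "i < dim_row (complete_laplacian N)" "j < dim_col (complete_laplacian N)"
  then have ij: "i < N" "j < N" by (auto simp: complete_laplacian_def)
  have dist_range: "gdist N E i k \<in> {1..diameter N E}" if "k < N" "k \<noteq> i" for k
    using gdist_pos[OF ij(1) that(1)] gdist_le_diameter[OF ij(1) that(1)] that by auto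
  show "weighted_path_laplacian N E (\<lambda>d. 1) $$ (i,j) = complete_laplacian N $$ (i,j)"
  proof (cases "i = j")
    case False
    then have "(\<Sum>d = 1..diameter N E. path_laplacian N E d $$ (i,j))
        = (\<Sum>d = 1..diameter N E. if d = gdist N E i j then -1 else 0)"
      using ij by (intro sum.cong) (auto simp: path_laplacian_def)
    also have "\<dots> = -1" using dist_range[of j] ij False by (simp add: sum.delta')
    finally show ?thesis using ij False by (simp add: index_weighted_path_laplacian complete_laplacian_index)
  next
    case True
    let ?S = "{..<N} - {i}"
    have "real (card {k. k < N \<and> k \<noteq> i \<and> gdist N E i k = d})
        = (\<Sum>k\<in>?S. if gdist N E i k = d then 1 else 0)" for d
    proof -
      have "{k. k < N \<and> k \<noteq> i \<and> gdist N E i k = d} = {k \<in> ?S. gdist N E i k = d}" by auto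
      then show ?thesis by (simp add: sum.inter_filter[symmetric])
    qed
    then have "(\<Sum>d = 1..diameter N E. path_laplacian N E d $$ (i,i))
        = (\<Sum>d = 1..diameter N E. \<Sum>k\<in>?S. if gdist N E i k = d then 1 else 0)"
      using ij by (simp add: path_laplacian_def)
    also have "\<dots> = (\<Sum>k\<in>?S. \<Sum>d = 1..diameter N E. if gdist N E i k = d then 1 else 0)"
      by (rule sum.swap)
    also have "\<dots> = (\<Sum>k\<in>?S. 1)"
      using dist_range by (intro sum.cong) (auto simp: sum.delta)
    also have "\<dots> = real N - 1" using ij by simp
    finally show ?thesis using ij True by (simp add: index_weighted_path_laplacian complete_laplacian_index)
  qed
qed (auto simp: complete_laplacian_def weighted_path_laplacian_def)

lemma laplacian_carrier: "laplacian N E \<in> carrier_mat N N"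
  by (simp add: laplacian_def)

lemma laplacian_symmetric: "(laplacian N E)\<^sup>T = laplacian N E"
  using weighted_path_laplacian_symmetric by (simp add: laplacian_eq_weighted[symmetric])

lemma largest_eig_laplacian_pos: "eig (laplacian N E) N > 0"
proof (rule largest_eig_pos_if_trace_pos[OF laplacian_carrier laplacian_symmetric])
  obtain j where "E 0 j" using exists_edge ..
  then have "j \<in> {k. k < N \<and> E 0 k}" using edge_vertices by auto
  then have "0 < card {k. k < N \<and> E 0 k}"
    by (subst card_gt_0_iff) auto
  then have "1 \<le> laplacian N E $$ (0,0)" using two_le_N by (simp add: laplacian_def)
  also have "\<dots> \<le> mat_trace (laplacian N E)"
    using two_le_N unfolding mat_trace_def by (intro member_le_sum) (auto simp: laplacian_def)
  finally show "0 < mat_trace (laplacian N E)" by simp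
qed

lemma tendsto_eigenratio_weighted:
  assumes lim: "\<And>d. d \<in> {1..diameter N E} \<Longrightarrow> ((\<lambda>t. w t d) \<longlongrightarrow> c d) F"
    and nz: "eig (weighted_path_laplacian N E c) N \<noteq> 0"
  shows "((\<lambda>t. eigenratio (weighted_path_laplacian N E (w t))) \<longlongrightarrow>
      eigenratio (weighted_path_laplacian N E c)) F"
proof (rule tendsto_eigenratio[OF weighted_path_laplacian_carrier weighted_path_laplacian_symmetric
      weighted_path_laplacian_carrier weighted_path_laplacian_symmetric _ two_le_N nz])
  fix i j assume "i < N" "j < N"
  then show "((\<lambda>t. weighted_path_laplacian N E (w t) $$ (i,j)) \<longlongrightarrow> weighted_path_laplacian N E c $$ (i,j)) F"
    unfolding index_weighted_path_laplacian[OF \<open>i < N\<close> \<open>j < N\<close>]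
    by (intro tendsto_sum tendsto_mult tendsto_const lim)
qed

lemma tendsto_eigenratio_laplacian:
  assumes "((\<lambda>t. w t 1) \<longlongrightarrow> 1) F" "\<And>d. 2 \<le> d \<Longrightarrow> ((\<lambda>t. w t d) \<longlongrightarrow> 0) F"
  shows "((\<lambda>t. eigenratio (weighted_path_laplacian N E (w t))) \<longlongrightarrow> eigenratio (laplacian N E)) F"
proof -
  have "((\<lambda>t. w t d) \<longlongrightarrow> (if d = 1 then 1 else 0)) F" if "d \<in> {1..diameter N E}" for d
    using that assms by (cases "d = 1") auto
  moreover have "eig (weighted_path_laplacian N E (\<lambda>d. if d = 1 then 1 else 0)) N \<noteq> 0"
    unfolding laplacian_eq_weighted using largest_eig_laplacian_pos by simp
  ultimately have "((\<lambda>t. eigenratio (weighted_path_laplacian N E (w t))) \<longlongrightarrow>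
      eigenratio (weighted_path_laplacian N E (\<lambda>d. if d = 1 then 1 else 0))) F"
    by (rule tendsto_eigenratio_weighted)
  then show ?thesis by (simp only: laplacian_eq_weighted)
qed

lemma tendsto_eigenratio_one:
  assumes "\<And>d. 1 \<le> d \<Longrightarrow> ((\<lambda>t. w t d) \<longlongrightarrow> 1) F"
  shows "((\<lambda>t. eigenratio (weighted_path_laplacian N E (w t))) \<longlongrightarrow> 1) F"
proof -
  have "eig (weighted_path_laplacian N E (\<lambda>d. 1)) N \<noteq> 0"
    using eig_complete_laplacian(2)[OF two_le_N] two_le_N by (simp add: complete_laplacian_eq_weighted)
  with assms have "((\<lambda>t. eigenratio (weighted_path_laplacian N E (w t))) \<longlongrightarrow>
      eigenratio (weighted_path_laplacian N E (\<lambda>d. 1))) F"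
    by (intro tendsto_eigenratio_weighted) auto
  moreover have "eigenratio (complete_laplacian N) = 1"
    using eig_complete_laplacian[OF two_le_N] two_le_N carrier_matD(1)[OF complete_laplacian_carrier]
    by (simp add: eigenratio_def)
  ultimately show ?thesis by (simp add: complete_laplacian_eq_weighted)
qed

end

lemma tendsto_exp_neg_at_top: "0 < c \<Longrightarrow> ((\<lambda>t. exp (- t * c)) \<longlongrightarrow> (0 :: real)) at_top"
proof -
  assume "0 < c"
  then have "filterlim (\<lambda>t. t * c) at_top at_top"
    by (intro filterlim_at_top_mult_tendsto_pos[OF tendsto_const] filterlim_ident)
  then have "filterlim (\<lambda>t. - t * c) at_bot at_top"
    by (simp add: filterlim_uminus_at_top)
  then show ?thesis by (rule filterlim_compose[OF exp_at_bot])
qed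

lemma tendsto_powr_neg_at_top: "1 < x \<Longrightarrow> ((\<lambda>s. x powr - s) \<longlongrightarrow> (0 :: real)) at_top"
  using tendsto_exp_neg_at_top[of "ln x"] by (simp add: powr_def)

theorem lemma1:
  fixes N :: nat and E :: "nat \<Rightarrow> nat \<Rightarrow> bool"
  assumes "simple_graph N E" and "connected_graph N E" and "N \<ge> 2"
  shows "((\<lambda>s. eigenratio (mellin_laplacian N E s)) \<longlongrightarrow> eigenratio (laplacian N E)) at_top \<and>
     ((\<lambda>s. eigenratio (mellin_laplacian N E s)) \<longlongrightarrow> 1) (at_right 0) \<and>
     ((\<lambda>lam. eigenratio (laplace_laplacian N E lam)) \<longlongrightarrow> eigenratio (laplacian N E)) at_top \<and>
     ((\<lambda>lam. eigenratio (laplace_laplacian N E lam)) \<longlongrightarrow> 1) (at_right 0)"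
proof -
  interpret connected_simple_graph N E using assms by unfold_locales
  have "((\<lambda>s. real d powr - s) \<longlongrightarrow> 0) at_top" if "2 \<le> d" for d
    using that by (intro tendsto_powr_neg_at_top) simp
  moreover have "((\<lambda>lam. if d = 1 then 1 else exp (- lam * real d)) \<longlongrightarrow> 0) at_top" if "2 \<le> d" for d
    using that tendsto_exp_neg_at_top[of "real d"] by (cases "d = 1") auto
  moreover have "((\<lambda>s. real d powr - s) \<longlongrightarrow> 1) (at_right 0)" if "1 \<le> d" for d
  proof -
    have "((\<lambda>s. real d powr - s) \<longlongrightarrow> real d powr - 0) (at_right 0)"
      using that by (intro tendsto_intros) auto
    then show ?thesis using that by simp
  qed
  moreover have "((\<lambda>lam. if d = 1 then 1 else exp (- lam * real d)) \<longlongrightarrow> 1) (at_right 0)" for d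
  proof -
    have "((\<lambda>lam. exp (- lam * real d)) \<longlongrightarrow> exp (- 0 * real d)) (at_right 0)"
      by (intro tendsto_intros)
    then show ?thesis by (cases "d = 1") simp_all
  qed
  ultimately show ?thesis
    unfolding mellin_laplacian_eq_weighted laplace_laplacian_eq_weighted
    by (intro conjI tendsto_eigenratio_laplacian tendsto_eigenratio_one) (auto simp: tendsto_const)
qed

end
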